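(* For any continuous function $f:\mathrm{SO}(3)\to S^3$, there exists a rotation $R\in\mathrm{SO}(3)$ such that $d(R,\mathbf{R}_Q(f(R)))=\pi$.
   Context: $S^3\subset\mathbb{R}^4$ is the set of unit quaternions, identifying $w+x\mathbf{i}+y\mathbf{j}+z\mathbf{k}$ with $(w,x,y,z)$. $\mathbf{R}_Q:S^3\to\mathrm{SO}(3)$ is the standard conversion from a unit quaternion to the rotation it represents: $$\mathbf{R}_Q(w,x,y,z)=\begin{bmatrix}1-2y^2-2z^2 & 2(xy-zw) & 2(xz+yw)\\ 2(xy+zw) & 1-2x^2-2z^2 & 2(yz-xw)\\ 2(xz-yw) & 2(yz+xw) & 1-2x^2-2y^2\end{bmatrix}.$$ For $R_1,R_2\in\mathrm{SO}(3)$, $d(R_1,R_2)=\cos^{-1}\frac{\mathrm{tr}(R_2R_1^{-1})-1}{2}\in[0,\pi]$ is the angle of the rotation $R_2R_1^{-1}$. *)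

theory Defs
  imports "HOL-Analysis.Analysis"
begin

definition SO3 :: "(real^3^3) set" where
  "SO3 = {R. rotation_matrix R}"

text \<open>S^3 as unit vectors of R^4; a quaternion w + x i + y j + z k is the vector
  with components q$1 = w, q$2 = x, q$3 = y, q$4 = z.\<close>
definition S3 :: "(real^4) set" where
  "S3 = {q. norm q = 1}"

definition quat_to_rot :: "real^4 \<Rightarrow> real^3^3" where
  "quat_to_rot q = (let w = q$1; x = q$2; y = q$3; z = q$4 in
     vector [vector [1 - 2*y^2 - 2*z^2, 2*(x*y - z*w), 2*(x*z + y*w)],
             vector [2*(x*y + z*w), 1 - 2*x^2 - 2*z^2, 2*(y*z - x*w)],
             vector [2*(x*z - y*w), 2*(y*z + x*w), 1 - 2*x^2 - 2*y^2]])"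

definition rot_dist :: "real^3^3 \<Rightarrow> real^3^3 \<Rightarrow> real" where
  "rot_dist R1 R2 = arccos ((trace (R2 ** matrix_inv R1) - 1) / 2)"

end

theory Submission
  imports Defs
begin

text \<open>The rotations about the z-axis by the angles 2t, 0 \<le> t \<le> pi, form a loop in SO(3)
  whose lift to S^3, t \<mapsto> cos t + (sin t) k, runs from 1 to -1. Restricting f to this loop,
  the inner product of f(R(t)) with the lift of R(t) is a continuous function of t that changes
  sign between t = 0 and t = pi, so it vanishes somewhere. At such a t the unit quaternions
  f(R) and the lift of R are orthogonal, and for unit quaternions p, q the rotations satisfy
  tr(R_Q(q) R_Q(p)^T) = 4 (p\<cdot>q)^2 - 1, so their distance is arccos(-1) = pi.\<close>

lemma inner_vec4: "(p::real^4) \<bullet> q = p$1 * q$1 + p$2 * q$2 + p$3 * q$3 + p$4 * q$4"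
  by (simp add: inner_vec_def sum_4)

lemma S3_sum_squares: "q \<in> S3 \<Longrightarrow> q$1^2 + q$2^2 + q$3^2 + q$4^2 = 1"
  unfolding S3_def by (simp add: norm_eq_1 inner_vec4 power2_eq_square)

lemma vector_4 [simp]:
  "(vector [a, b, c, d] :: ('a::zero)^4) $ 1 = a"
  "(vector [a, b, c, d] :: ('a::zero)^4) $ 2 = b"
  "(vector [a, b, c, d] :: ('a::zero)^4) $ 3 = c"
  "(vector [a, b, c, d] :: ('a::zero)^4) $ 4 = d"
  unfolding vector_def by simp_all

lemma continuous_on_vec_entrywise:
  "(\<And>i. continuous_on S (\<lambda>x. f x $ i)) \<Longrightarrow> continuous_on S f"
  using continuous_on_vec_lambda[of S "\<lambda>i x. f x $ i"] by simp

lemma quat_to_rot_uminus [simp]: "quat_to_rot (- q) = quat_to_rot q"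
  by (simp add: quat_to_rot_def Let_def algebra_simps)

lemma continuous_on_quat_to_rot: "continuous_on S quat_to_rot"
proof (intro continuous_on_vec_entrywise)
  fix i j :: 3
  show "continuous_on S (\<lambda>q. quat_to_rot q $ i $ j)"
    using exhaust_3[of i] exhaust_3[of j]
    by (elim disjE) (simp_all add: quat_to_rot_def Let_def continuous_intros)
qed

lemma orthogonal_matrix_quat_to_rot:
  assumes "q \<in> S3"
  shows "orthogonal_matrix (quat_to_rot q)"
  using S3_sum_squares[OF assms]
  unfolding orthogonal_matrix quat_to_rot_def Let_def
  by (simp add: vec_eq_iff forall_3 matrix_matrix_mult_def sum_3 transpose_def mat_def)
    (intro conjI; algebra)

lemma det_quat_to_rot:
  assumes "q \<in> S3"
  shows "det (quat_to_rot q) = 1"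
  using S3_sum_squares[OF assms]
  unfolding quat_to_rot_def Let_def
  by (simp add: det_3) algebra

lemma quat_to_rot_in_SO3: "q \<in> S3 \<Longrightarrow> quat_to_rot q \<in> SO3"
  by (simp add: SO3_def rotation_matrix_def orthogonal_matrix_quat_to_rot det_quat_to_rot)

lemma trace_quat_to_rot_mult_transpose:
  assumes "p \<in> S3" and "q \<in> S3"
  shows "trace (quat_to_rot q ** transpose (quat_to_rot p)) = 4 * (p \<bullet> q)^2 - 1"
  using S3_sum_squares[OF assms(1)] S3_sum_squares[OF assms(2)]
  unfolding quat_to_rot_def Let_def inner_vec4
  by (simp add: trace_def sum_3 matrix_matrix_mult_def transpose_def) algebra

lemma matrix_inv_unique:
  fixes A :: "'a::semiring_1^'n^'n"
  assumes "A ** B = mat 1" and "B ** A = mat 1"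
  shows "matrix_inv A = B"
proof -
  have inv: "A ** matrix_inv A = mat 1 \<and> matrix_inv A ** A = mat 1"
    unfolding matrix_inv_def by (rule someI[of _ B]) (use assms in simp)
  have "matrix_inv A = (B ** A) ** matrix_inv A"
    using assms(2) by simp
  also have "\<dots> = B"
    using inv by (simp flip: matrix_mul_assoc)
  finally show ?thesis .
qed

lemma matrix_inv_orthogonal_matrix:
  "orthogonal_matrix Q \<Longrightarrow> matrix_inv Q = transpose Q"
  unfolding orthogonal_matrix_def by (simp add: matrix_inv_unique)

lemma rot_dist_quat_to_rot:
  assumes "p \<in> S3" and "q \<in> S3"
  shows "rot_dist (quat_to_rot p) (quat_to_rot q) = arccos (2 * (p \<bullet> q)^2 - 1)"
proof -
  have "trace (quat_to_rot q ** matrix_inv (quat_to_rot p)) = 4 * (p \<bullet> q)^2 - 1"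
    using assms by (simp add: matrix_inv_orthogonal_matrix orthogonal_matrix_quat_to_rot
        trace_quat_to_rot_mult_transpose)
  then show ?thesis
    unfolding rot_dist_def by (simp add: diff_divide_distrib)
qed

definition z_rotation_quat :: "real \<Rightarrow> real^4" where
  "z_rotation_quat t = vector [cos t, 0, 0, sin t]"

lemma z_rotation_quat_in_S3: "z_rotation_quat t \<in> S3"
  unfolding S3_def by (simp add: norm_eq_1 inner_vec4 z_rotation_quat_def flip: power2_eq_square)

lemma z_rotation_quat_pi: "z_rotation_quat pi = - z_rotation_quat 0"
  by (simp add: z_rotation_quat_def vec_eq_iff forall_4)

lemma continuous_on_z_rotation_quat: "continuous_on S z_rotation_quat"
proof (intro continuous_on_vec_entrywise)
  fix i :: 4
  show "continuous_on S (\<lambda>t. z_rotation_quat t $ i)"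
    using exhaust_4[of i] by (elim disjE) (simp_all add: z_rotation_quat_def continuous_intros)
qed

lemma IVT_antipodal:
  fixes \<phi> :: "'a::linear_continuum_topology \<Rightarrow> real"
  assumes "a \<le> b" and "continuous_on {a..b} \<phi>" and "\<phi> b = - \<phi> a"
  shows "\<exists>t\<in>{a..b}. \<phi> t = 0"
  using IVT'[of \<phi> a 0 b] IVT2'[of \<phi> b 0 a] assms
  by (cases "\<phi> a \<le> 0") auto

theorem theorem1:
  fixes f :: "real^3^3 \<Rightarrow> real^4"
  assumes "continuous_on SO3 f"
    and "f ` SO3 \<subseteq> S3"
  shows "\<exists>R\<in>SO3. rot_dist R (quat_to_rot (f R)) = pi"
proof -
  let ?R = "\<lambda>t. quat_to_rot (z_rotation_quat t)"
  define \<phi> where "\<phi> t = z_rotation_quat t \<bullet> f (?R t)" for t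
  have R_SO3: "?R t \<in> SO3" for t
    by (rule quat_to_rot_in_SO3[OF z_rotation_quat_in_S3])
  have "continuous_on {0..pi} ?R"
    by (rule continuous_on_compose2[OF continuous_on_quat_to_rot[of UNIV]
          continuous_on_z_rotation_quat]) simp
  then have "continuous_on {0..pi} (\<lambda>t. f (?R t))"
    using continuous_on_compose2[OF assms(1)] R_SO3 by blast
  then have "continuous_on {0..pi} \<phi>"
    unfolding \<phi>_def by (intro continuous_intros continuous_on_z_rotation_quat)
  moreover have "\<phi> pi = - \<phi> 0"
    by (simp add: \<phi>_def z_rotation_quat_pi)
  ultimately obtain t where "\<phi> t = 0"
    using IVT_antipodal[of 0 pi \<phi>] by auto
  moreover have "f (?R t) \<in> S3"
    using assms(2) R_SO3 by blast
  ultimately have "rot_dist (?R t) (quat_to_rot (f (?R t))) = pi"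
    by (simp add: rot_dist_quat_to_rot z_rotation_quat_in_S3 \<phi>_def)
  then show ?thesis
    using R_SO3 by blast
qed

end
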